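(* Let $(S_n)_{n\ge0}$ be defined by $S_0=3$, $S_1=1$, $S_2=3$ and $S_{n+1}=S_n+S_{n-1}+S_{n-2}$ for $n\ge 2$. Let $\alpha,\beta,\gamma$ be the roots of $x^3-x^2-x-1=0$ and $C_n=\alpha^n\beta^n+\alpha^n\gamma^n+\beta^n\gamma^n$ for $n\ge0$. Then for all $n\ge 2$, $$S_nS_{n-1}=S_{2n-1}+C_{n-1}-C_{n-2}.$$
   Context: $S_n$ is the generalized Lucas (generalized Tribonacci) sequence. *)

theory Defs
  imports Complex_Main
begin

fun S :: "nat \<Rightarrow> int" where
  "S 0 = 3"
| "S (Suc 0) = 1"
| "S (Suc (Suc 0)) = 3"
| "S (Suc (Suc (Suc n))) = S (Suc (Suc n)) + S (Suc n) + S n"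

definition C :: "complex \<Rightarrow> complex \<Rightarrow> complex \<Rightarrow> nat \<Rightarrow> complex" where
  "C a b c n = a ^ n * b ^ n + a ^ n * c ^ n + b ^ n * c ^ n"

end

theory Submission
  imports Defs
begin

text \<open>Distinct roots \<alpha>, \<beta>, \<gamma> of x^3 - x^2 - x - 1 have elementary symmetric functions
  1, -1, 1, so S n is the power sum p n = \<alpha>^n + \<beta>^n + \<gamma>^n (Newton's recurrence). Expanding
  a product of consecutive power sums gives p (k+2) p (k+1) = p (2k+3) + \<Sum> (xy)^(k+1) (x + y)
  over the pairs of roots; writing x + y = 1 - z and using \<alpha>\<beta>\<gamma> = 1 turns the correction
  term into C (k+1) - C k.\<close>

definition power_sum3 :: "'a::comm_ring_1 \<Rightarrow> 'a \<Rightarrow> 'a \<Rightarrow> nat \<Rightarrow> 'a" where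
  "power_sum3 a b c n = a ^ n + b ^ n + c ^ n"

lemma cubic_distinct_roots_vieta:
  fixes a b c s t u :: "'a::idom"
  assumes "a \<noteq> b" "a \<noteq> c" "b \<noteq> c"
    and root_a: "a ^ 3 - s * a ^ 2 + t * a - u = 0"
    and root_b: "b ^ 3 - s * b ^ 2 + t * b - u = 0"
    and root_c: "c ^ 3 - s * c ^ 2 + t * c - u = 0"
  shows "a + b + c = s" "a * b + a * c + b * c = t" "a * b * c = u"
proof -
  have "(a - b) * (a^2 + a*b + b^2 - s * (a + b) + t) = 0"
    using root_a root_b by algebra
  then have ab: "a^2 + a*b + b^2 - s * (a + b) + t = 0"
    using \<open>a \<noteq> b\<close> by simp
  have "(a - c) * (a^2 + a*c + c^2 - s * (a + c) + t) = 0"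
    using root_a root_c by algebra
  then have ac: "a^2 + a*c + c^2 - s * (a + c) + t = 0"
    using \<open>a \<noteq> c\<close> by simp
  have "(b - c) * (a + b + c - s) = 0"
    using ab ac by algebra
  then show e1: "a + b + c = s"
    using \<open>b \<noteq> c\<close> by simp
  show e2: "a * b + a * c + b * c = t"
    using ab e1 by algebra
  show "a * b * c = u"
    using root_a e1 e2 by algebra
qed

lemma power_sum3_recurrence:
  "power_sum3 a b c (n + 3) =
     (a + b + c) * power_sum3 a b c (n + 2) - (a * b + a * c + b * c) * power_sum3 a b c (n + 1)
     + a * b * c * power_sum3 a b c n"
  unfolding power_sum3_def power_add by (simp add: algebra_simps eval_nat_numeral)

lemma S_eq_power_sum3:
  fixes a b c :: "'a::comm_ring_1"
  assumes "a + b + c = 1" "a * b + a * c + b * c = -1" "a * b * c = 1"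
  shows "of_int (S n) = power_sum3 a b c n"
proof (induction n rule: S.induct)
  case 3
  have "a^2 + b^2 + c^2 = (a + b + c)^2 - 2 * (a * b + a * c + b * c)"
    by (simp add: power2_eq_square algebra_simps)
  also have "\<dots> = 3"
    using assms by simp
  finally show ?case
    by (simp add: power_sum3_def numeral_eq_Suc)
next
  case (4 n)
  then show ?case
    using power_sum3_recurrence[of a b c n] assms by (simp add: eval_nat_numeral)
qed (use assms in \<open>simp_all add: power_sum3_def\<close>)

lemma power_sum3_mult_consecutive:
  "power_sum3 a b c (k + 2) * power_sum3 a b c (k + 1) =
     power_sum3 a b c (2 * k + 3)
     + (a + b + c) * ((a * b) ^ (k + 1) + (a * c) ^ (k + 1) + (b * c) ^ (k + 1))
     - a * b * c * ((a * b) ^ k + (a * c) ^ k + (b * c) ^ k)"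
  unfolding power_sum3_def power_add power_mult power_mult_distrib
  by (simp add: algebra_simps eval_nat_numeral)

theorem mainTheorem4:
  fixes \<alpha> \<beta> \<gamma> :: complex and n :: nat
  assumes "\<alpha> \<noteq> \<beta>" and "\<alpha> \<noteq> \<gamma>" and "\<beta> \<noteq> \<gamma>"
    and "\<alpha> ^ 3 - \<alpha> ^ 2 - \<alpha> - 1 = 0"
    and "\<beta> ^ 3 - \<beta> ^ 2 - \<beta> - 1 = 0"
    and "\<gamma> ^ 3 - \<gamma> ^ 2 - \<gamma> - 1 = 0"
    and "n \<ge> 2"
  shows "of_int (S n * S (n - 1)) =
           of_int (S (2 * n - 1)) + C \<alpha> \<beta> \<gamma> (n - 1) - C \<alpha> \<beta> \<gamma> (n - 2)"
proof -
  have "x ^ 3 - 1 * x ^ 2 + (-1) * x - 1 = 0" if "x \<in> {\<alpha>, \<beta>, \<gamma>}" for x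
    using that assms(4-6) by auto
  then have e1: "\<alpha> + \<beta> + \<gamma> = 1" and e2: "\<alpha> * \<beta> + \<alpha> * \<gamma> + \<beta> * \<gamma> = -1"
    and e3: "\<alpha> * \<beta> * \<gamma> = 1"
    using cubic_distinct_roots_vieta[OF assms(1-3), of 1 "-1" 1] by simp_all
  obtain k where n: "n = k + 2"
    using \<open>n \<ge> 2\<close> by (metis add.commute le_Suc_ex)
  then have index: "n - 1 = k + 1" "n - 2 = k" "2 * n - 1 = 2 * k + 3"
    by simp_all
  have "power_sum3 \<alpha> \<beta> \<gamma> (k + 2) * power_sum3 \<alpha> \<beta> \<gamma> (k + 1) =
      power_sum3 \<alpha> \<beta> \<gamma> (2 * k + 3) + C \<alpha> \<beta> \<gamma> (k + 1) - C \<alpha> \<beta> \<gamma> k"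
    using power_sum3_mult_consecutive[of \<alpha> \<beta> \<gamma> k]
    unfolding e1 e3 C_def power_mult_distrib by simp
  then show ?thesis
    unfolding index of_int_mult S_eq_power_sum3[OF e1 e2 e3] unfolding n .
qed

end
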